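(* Every mirror graph is harmonic-even. Equivalently (for partial cubes), if $G$ is a mirror graph with isometric dimension $i(G)$, then every vertex $v$ of $G$ has a vertex at distance exactly $i(G)$ from $v$.
   Context: All graphs are finite, simple and connected; $d$ denotes the shortest-path distance. A partition $\{E_1,\dots,E_k\}$ of $E(G)$ is a mirror partition if for every $i$ there is an automorphism $\alpha_i$ of $G$ such that (i) for every edge $uv\in E_i$, $\alpha_i(u)=v$ and $\alpha_i(v)=u$; (ii) $G-E_i$ has exactly two connected components $G_i^1,G_i^2$ and $\alpha_i$ maps $G_i^1$ isomorphically onto $G_i^2$. A graph with a mirror partition is a mirror graph. A partial cube is a graph admitting an isometric embedding into a hypercube $Q_d$. On edges define $ab\,\Theta\,xy$ iff $d(a,x)+d(b,y)\neq d(a,y)+d(b,x)$; in a partial cube $\Theta$ is an equivalence relation whose classes are the $\Theta$-classes, and the isometric dimension $i(G)$ is the number of $\Theta$-classes. Every mirror graph is a partial cube and its mirror partition coincides with the partition into $\Theta$-classes. A graph is even if every vertex $v$ has a unique vertex $\bar v$ at distance $\mathrm{diam}(G)$; it is harmonic-even if moreover $\bar u\bar v$ is an edge whenever $uv$ is an edge. A partial cube is harmonic-even iff every vertex has a vertex at distance $i(G)$ from it. *)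

theory Defs
  imports Main
begin

definition graph :: "'a set \<Rightarrow> ('a \<Rightarrow> 'a \<Rightarrow> bool) \<Rightarrow> bool" where
  "graph V E \<longleftrightarrow> finite V \<and> V \<noteq> {}
     \<and> (\<forall>u v. E u v \<longrightarrow> u \<in> V \<and> v \<in> V)
     \<and> (\<forall>u v. E u v \<longrightarrow> E v u)
     \<and> (\<forall>u. \<not> E u u)"

definition connected_graph :: "'a set \<Rightarrow> ('a \<Rightarrow> 'a \<Rightarrow> bool) \<Rightarrow> bool" where
  "connected_graph V E \<longleftrightarrow> graph V E \<and> (\<forall>u\<in>V. \<forall>v\<in>V. E\<^sup>*\<^sup>* u v)"

definition dist :: "('a \<Rightarrow> 'a \<Rightarrow> bool) \<Rightarrow> 'a \<Rightarrow> 'a \<Rightarrow> nat" where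
  "dist E u v = (LEAST n. (E ^^ n) u v)"

definition diam :: "'a set \<Rightarrow> ('a \<Rightarrow> 'a \<Rightarrow> bool) \<Rightarrow> nat" where
  "diam V E = Max {dist E u v | u v. u \<in> V \<and> v \<in> V}"

definition even_graph :: "'a set \<Rightarrow> ('a \<Rightarrow> 'a \<Rightarrow> bool) \<Rightarrow> bool" where
  "even_graph V E \<longleftrightarrow> (\<forall>v\<in>V. \<exists>!w. w \<in> V \<and> dist E v w = diam V E)"

definition antipode :: "'a set \<Rightarrow> ('a \<Rightarrow> 'a \<Rightarrow> bool) \<Rightarrow> 'a \<Rightarrow> 'a" where
  "antipode V E v = (THE w. w \<in> V \<and> dist E v w = diam V E)"

definition harmonic_even :: "'a set \<Rightarrow> ('a \<Rightarrow> 'a \<Rightarrow> bool) \<Rightarrow> bool" where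
  "harmonic_even V E \<longleftrightarrow> even_graph V E \<and>
     (\<forall>u v. E u v \<longrightarrow> E (antipode V E u) (antipode V E v))"

definition automorphism :: "'a set \<Rightarrow> ('a \<Rightarrow> 'a \<Rightarrow> bool) \<Rightarrow> ('a \<Rightarrow> 'a) \<Rightarrow> bool" where
  "automorphism V E \<alpha> \<longleftrightarrow> bij_betw \<alpha> V V \<and> (\<forall>u\<in>V. \<forall>v\<in>V. E u v \<longleftrightarrow> E (\<alpha> u) (\<alpha> v))"

definition edges :: "('a \<Rightarrow> 'a \<Rightarrow> bool) \<Rightarrow> 'a set set" where
  "edges E = {{u, v} | u v. E u v}"

definition del_edges :: "('a \<Rightarrow> 'a \<Rightarrow> bool) \<Rightarrow> 'a set set \<Rightarrow> 'a \<Rightarrow> 'a \<Rightarrow> bool" where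
  "del_edges E F = (\<lambda>u v. E u v \<and> {u, v} \<notin> F)"

definition components :: "'a set \<Rightarrow> ('a \<Rightarrow> 'a \<Rightarrow> bool) \<Rightarrow> 'a set set" where
  "components V E = {{w \<in> V. E\<^sup>*\<^sup>* v w} | v. v \<in> V}"

definition partition_of :: "'b set set \<Rightarrow> 'b set \<Rightarrow> bool" where
  "partition_of P S \<longleftrightarrow> (\<forall>X\<in>P. X \<noteq> {}) \<and> (\<forall>X\<in>P. \<forall>Y\<in>P. X \<noteq> Y \<longrightarrow> X \<inter> Y = {}) \<and> \<Union>P = S"

definition mirror_partition :: "'a set \<Rightarrow> ('a \<Rightarrow> 'a \<Rightarrow> bool) \<Rightarrow> 'a set set set \<Rightarrow> bool" where
  "mirror_partition V E P \<longleftrightarrow> partition_of P (edges E) \<and>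
     (\<forall>F\<in>P. \<exists>\<alpha>. automorphism V E \<alpha>
        \<and> (\<forall>u v. E u v \<and> {u, v} \<in> F \<longrightarrow> \<alpha> u = v \<and> \<alpha> v = u)
        \<and> (\<exists>C1 C2. components V (del_edges E F) = {C1, C2} \<and> C1 \<noteq> C2
             \<and> bij_betw \<alpha> C1 C2
             \<and> (\<forall>u\<in>C1. \<forall>v\<in>C1. del_edges E F u v \<longleftrightarrow> del_edges E F (\<alpha> u) (\<alpha> v))))"

definition mirror_graph :: "'a set \<Rightarrow> ('a \<Rightarrow> 'a \<Rightarrow> bool) \<Rightarrow> bool" where
  "mirror_graph V E \<longleftrightarrow> (\<exists>P. mirror_partition V E P)"

end

theory Submission
  imports Defs
begin

text \<open>
  Every edge \<open>uv\<close> of a mirror graph lies in a mirror class \<open>F\<close> whose automorphism exchanges the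
  two components of \<open>G - F\<close>; glued with its inverse it becomes an involutive automorphism \<open>\<beta>\<close>
  of \<open>G\<close> that swaps the two halves and flips every edge between them, in particular \<open>\<beta> u = v\<close>.
  A shortest path from \<open>x\<close> to \<open>\<beta> b\<close>, with \<open>x\<close> and \<open>b\<close> in the same half, has to cross the cut,
  and reflecting the part after the crossing edge shows \<open>d(x, b) < d(x, \<beta> b)\<close>.
  Hence two vertices at distance \<open>diam G\<close> are separated by every cut, and induction along a
  shortest path shows that every vertex \<open>y\<close> satisfies \<open>d(x, y) + d(y, x') = diam G\<close> whenever
  \<open>d(x, x') = diam G\<close>. This forces uniqueness of \<open>x'\<close>, and applied to the antipodes of the
  endpoints of an edge it shows that they are adjacent. Existence of antipodes follows by
  transporting one diametral pair along a path with the reflections.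
\<close>

lemma relpowp_sym: "symp R \<Longrightarrow> (R ^^ n) x y \<Longrightarrow> (R ^^ n) y x"
proof (induction n arbitrary: y)
  case (Suc n)
  then obtain z where "(R ^^ n) x z" "R z y" by (auto elim: relpowp_Suc_E)
  then show ?case using Suc by (meson relpowp_Suc_I2 sympD)
qed simp

lemma relpowp_map:
  assumes "\<And>x y. R x y \<Longrightarrow> R (f x) (f y)"
  shows "(R ^^ n) x y \<Longrightarrow> (R ^^ n) (f x) (f y)"
proof (induction n arbitrary: y)
  case (Suc n)
  then obtain z where "(R ^^ n) x z" "R z y" by (auto elim: relpowp_Suc_E)
  then show ?case using Suc assms by (meson relpowp_Suc_I)
qed simp

lemma relpowp_crossing_edge:
  "(R ^^ n) a c \<Longrightarrow> a \<in> T \<Longrightarrow> c \<notin> T \<Longrightarrow>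
    \<exists>i j p q. i + j + 1 = n \<and> (R ^^ i) a p \<and> R p q \<and> (R ^^ j) q c \<and> p \<in> T \<and> q \<notin> T"
proof (induction n arbitrary: c)
  case (Suc n)
  then obtain y where y: "(R ^^ n) a y" "R y c" by (auto elim: relpowp_Suc_E)
  show ?case
  proof (cases "y \<in> T")
    case True
    then show ?thesis using y Suc by (intro exI[of _ n] exI[of _ 0]) auto
  next
    case False
    then obtain i j p q where "i + j + 1 = n" "(R ^^ i) a p" "R p q" "(R ^^ j) q y" "p \<in> T" "q \<notin> T"
      using Suc.IH[OF y(1) Suc.prems(2)] by blast
    then show ?thesis using y by (intro exI[of _ i] exI[of _ "Suc j"]) (auto intro: relpowp_Suc_I)
  qed
qed simp

lemma dist_le_relpowp: "(E ^^ n) u v \<Longrightarrow> dist E u v \<le> n"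
  unfolding dist_def by (rule Least_le)

lemma dist_self [simp]: "dist E u u = 0"
  using dist_le_relpowp[of 0 E u u] by simp

lemma components_subset: "C \<in> components V R \<Longrightarrow> C \<subseteq> V"
  unfolding components_def by auto

lemma components_cover: "x \<in> V \<Longrightarrow> \<exists>C\<in>components V R. x \<in> C"
  unfolding components_def by auto

lemma components_closed:
  "(\<And>x y. R x y \<Longrightarrow> y \<in> V) \<Longrightarrow> C \<in> components V R \<Longrightarrow> x \<in> C \<Longrightarrow> R x y \<Longrightarrow> y \<in> C"
  unfolding components_def by (auto intro: rtranclp.rtrancl_into_rtrancl)

lemma components_disjoint:
  assumes "symp R" "C \<in> components V R" "C' \<in> components V R" "x \<in> C" "x \<in> C'"
  shows "C = C'"
proof -
  obtain c c' where C: "C = {w \<in> V. R\<^sup>*\<^sup>* c w}" and C': "C' = {w \<in> V. R\<^sup>*\<^sup>* c' w}"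
    using assms(2,3) unfolding components_def by blast
  have "R\<^sup>*\<^sup>* c x" "R\<^sup>*\<^sup>* x c'"
    using assms(4,5) sympD[OF symp_rtranclp[OF assms(1)]] unfolding C C' by auto
  then have "R\<^sup>*\<^sup>* c c'" "R\<^sup>*\<^sup>* c' c"
    using sympD[OF symp_rtranclp[OF assms(1)]] rtranclp_trans by metis+
  then have "R\<^sup>*\<^sup>* c w \<longleftrightarrow> R\<^sup>*\<^sup>* c' w" for w by (metis rtranclp_trans)
  then show ?thesis unfolding C C' by simp
qed

lemma components_eq_doubleton:
  assumes "symp R" "components V R = {C1, C2}" "C1 \<noteq> C2"
  shows "V = C1 \<union> C2" "C1 \<inter> C2 = {}"
  using components_cover[of _ V R] components_subset[of _ V R]
    components_disjoint[OF assms(1), of C1 V C2] assms(2,3) by auto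

definition half_swap :: "'a set \<Rightarrow> ('a \<Rightarrow> 'a) \<Rightarrow> 'a \<Rightarrow> 'a" where
  "half_swap C \<alpha> x = (if x \<in> C then \<alpha> x else the_inv_into C \<alpha> x)"

lemma half_swap_first_half:
  assumes "bij_betw \<alpha> C1 C2" "C1 \<inter> C2 = {}" "x \<in> C1"
  shows "half_swap C1 \<alpha> x = \<alpha> x" "half_swap C1 \<alpha> x \<in> C2"
    "half_swap C1 \<alpha> (half_swap C1 \<alpha> x) = x"
proof -
  show "half_swap C1 \<alpha> x = \<alpha> x" "half_swap C1 \<alpha> x \<in> C2"
    using assms unfolding half_swap_def bij_betw_def by auto
  then show "half_swap C1 \<alpha> (half_swap C1 \<alpha> x) = x"
    using assms the_inv_into_f_f[OF bij_betw_imp_inj_on[OF assms(1)]] unfolding half_swap_def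
    by auto
qed

lemma half_swap_second_half:
  assumes "bij_betw \<alpha> C1 C2" "C1 \<inter> C2 = {}" "x \<in> C2"
  shows "half_swap C1 \<alpha> x \<in> C1" "\<alpha> (half_swap C1 \<alpha> x) = x"
    "half_swap C1 \<alpha> (half_swap C1 \<alpha> x) = x"
proof -
  have inj: "inj_on \<alpha> C1" using assms(1) by (rule bij_betw_imp_inj_on)
  have "x \<in> \<alpha> ` C1" using assms(1,3) by (simp add: bij_betw_def)
  moreover have "half_swap C1 \<alpha> x = the_inv_into C1 \<alpha> x"
    using assms(2,3) unfolding half_swap_def by auto
  ultimately show "half_swap C1 \<alpha> x \<in> C1" "\<alpha> (half_swap C1 \<alpha> x) = x"
    using the_inv_into_into[OF inj _ subset_refl] f_the_inv_into_f[OF inj] by auto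
  then show "half_swap C1 \<alpha> (half_swap C1 \<alpha> x) = x"
    using half_swap_first_half(1)[OF assms(1,2)] by simp
qed

lemma mirror_partitionE:
  assumes "mirror_partition V E P" "F \<in> P"
  obtains \<alpha> C1 C2 where "automorphism V E \<alpha>"
    "\<And>x y. E x y \<Longrightarrow> {x, y} \<in> F \<Longrightarrow> \<alpha> x = y"
    "components V (del_edges E F) = {C1, C2}" "C1 \<noteq> C2" "bij_betw \<alpha> C1 C2"
  using assms unfolding mirror_partition_def
  by (elim conjE) (drule (1) bspec, elim exE conjE, metis)

locale finite_connected_graph =
  fixes V :: "'a set" and E :: "'a \<Rightarrow> 'a \<Rightarrow> bool"
  assumes connected: "connected_graph V E"
begin

lemma symp_E: "symp E"
  using connected unfolding connected_graph_def graph_def symp_def by blast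

lemma edge_in_V: "E u v \<Longrightarrow> u \<in> V \<and> v \<in> V"
  using connected unfolding connected_graph_def graph_def by blast

lemma finite_V: "finite V" and V_nonempty: "V \<noteq> {}" and irrefl_E: "\<not> E u u"
  using connected unfolding connected_graph_def graph_def by blast+

lemma walk_dist: "u \<in> V \<Longrightarrow> v \<in> V \<Longrightarrow> (E ^^ dist E u v) u v"
  using connected unfolding connected_graph_def dist_def
  by (metis LeastI_ex rtranclp_power)

lemma dist_commute: "u \<in> V \<Longrightarrow> v \<in> V \<Longrightarrow> dist E u v = dist E v u"
  by (meson antisym dist_le_relpowp relpowp_sym symp_E walk_dist)

lemma dist_eq_0_iff: "u \<in> V \<Longrightarrow> v \<in> V \<Longrightarrow> dist E u v = 0 \<longleftrightarrow> u = v"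
  using walk_dist[of u v] by auto

lemma dist_eq_1_iff: "u \<in> V \<Longrightarrow> v \<in> V \<Longrightarrow> dist E u v = 1 \<longleftrightarrow> E u v"
proof
  assume "u \<in> V" "v \<in> V" "E u v"
  then show "dist E u v = 1"
    using dist_le_relpowp[of 1 E u v] dist_eq_0_iff[of u v] irrefl_E by fastforce
qed (use walk_dist[of u v] in auto)

lemma dist_triangle:
  "u \<in> V \<Longrightarrow> v \<in> V \<Longrightarrow> w \<in> V \<Longrightarrow> dist E u w \<le> dist E u v + dist E v w"
  by (meson dist_le_relpowp relpowp_trans walk_dist)

lemma dist_SucE:
  assumes "u \<in> V" "v \<in> V" "dist E u v = Suc n"
  obtains y where "E y v" "dist E u y = n"
proof -
  obtain y where y: "(E ^^ n) u y" "E y v"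
    using walk_dist[OF assms(1,2)] assms(3) by (auto elim: relpowp_Suc_E)
  have "dist E u v \<le> dist E u y + 1"
    using dist_triangle[of u y v] dist_eq_1_iff[of y v] assms y edge_in_V by force
  then have "dist E u y = n" using dist_le_relpowp[OF y(1)] assms(3) by linarith
  then show ?thesis using that y(2) by blast
qed

lemma finite_dists: "finite {dist E u v | u v. u \<in> V \<and> v \<in> V}"
  using finite_V by (intro finite_image_set2) simp_all

lemma dist_le_diam: "u \<in> V \<Longrightarrow> v \<in> V \<Longrightarrow> dist E u v \<le> diam V E"
  unfolding diam_def using finite_dists by (intro Max_ge) auto

lemma diam_attained: "\<exists>u\<in>V. \<exists>v\<in>V. dist E u v = diam V E"
proof -
  have "diam V E \<in> {dist E u v | u v. u \<in> V \<and> v \<in> V}"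
    unfolding diam_def using finite_dists V_nonempty by (intro Max_in) auto
  then show ?thesis by fastforce
qed

definition reflection :: "'a set \<Rightarrow> ('a \<Rightarrow> 'a) \<Rightarrow> bool" where
  "reflection S \<beta> \<longleftrightarrow>
     (\<forall>x\<in>V. \<beta> x \<in> V \<and> \<beta> (\<beta> x) = x \<and> (\<beta> x \<in> S \<longleftrightarrow> x \<notin> S))
     \<and> (\<forall>x y. E x y \<longrightarrow> E (\<beta> x) (\<beta> y))
     \<and> (\<forall>x y. E x y \<longrightarrow> (x \<in> S \<longleftrightarrow> y \<notin> S) \<longrightarrow> \<beta> x = y)"

lemma reflectionD:
  assumes "reflection S \<beta>"
  shows "x \<in> V \<Longrightarrow> \<beta> x \<in> V" "x \<in> V \<Longrightarrow> \<beta> (\<beta> x) = x"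
    "x \<in> V \<Longrightarrow> \<beta> x \<in> S \<longleftrightarrow> x \<notin> S"
    "E x y \<Longrightarrow> E (\<beta> x) (\<beta> y)" "E x y \<Longrightarrow> x \<in> S \<longleftrightarrow> y \<notin> S \<Longrightarrow> \<beta> x = y"
  using assms unfolding reflection_def by blast+

lemma reflection_dist:
  assumes r: "reflection S \<beta>" and "u \<in> V" "v \<in> V"
  shows "dist E (\<beta> u) (\<beta> v) = dist E u v"
proof -
  have V: "\<beta> u \<in> V" "\<beta> v \<in> V" using reflectionD(1)[OF r] assms(2,3) by auto
  have "dist E (\<beta> u) (\<beta> v) \<le> dist E u v"
    using relpowp_map[OF reflectionD(4)[OF r] walk_dist[OF assms(2,3)]] by (rule dist_le_relpowp)
  moreover have "dist E (\<beta> (\<beta> u)) (\<beta> (\<beta> v)) \<le> dist E (\<beta> u) (\<beta> v)"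
    using relpowp_map[OF reflectionD(4)[OF r] walk_dist[OF V]]
    by (rule dist_le_relpowp)
  ultimately show ?thesis using reflectionD(2)[OF r] assms by simp
qed

lemma dist_less_reflection_same_side:
  assumes r: "reflection S \<beta>" and "x \<in> V" "b \<in> V" and side: "x \<in> S \<longleftrightarrow> b \<in> S"
  shows "dist E x b < dist E x (\<beta> b)"
proof -
  define T where "T = (if x \<in> S then S else - S)"
  have T: "x \<in> T" "\<beta> b \<notin> T" using side reflectionD(3)[OF r \<open>b \<in> V\<close>] unfolding T_def by simp_all
  obtain i j p q where ij: "i + j + 1 = dist E x (\<beta> b)" "(E ^^ i) x p" "E p q"
    "(E ^^ j) q (\<beta> b)" "p \<in> T" "q \<notin> T"
    using relpowp_crossing_edge[OF walk_dist[OF \<open>x \<in> V\<close> reflectionD(1)[OF r \<open>b \<in> V\<close>]] T]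
    by blast
  text \<open>The reflection flips the crossing edge, so it maps the tail \<open>q \<dots> \<beta> b\<close> onto a walk \<open>p \<dots> b\<close>.\<close>
  have "q \<in> S \<longleftrightarrow> p \<notin> S" using ij(5,6) unfolding T_def by (cases "x \<in> S") simp_all
  then have "\<beta> q = p" using reflectionD(5)[OF r sympD[OF symp_E ij(3)]] by blast
  moreover have "(E ^^ j) (\<beta> q) (\<beta> (\<beta> b))" using relpowp_map[OF reflectionD(4)[OF r] ij(4)] .
  ultimately have "(E ^^ j) p b" using reflectionD(2)[OF r \<open>b \<in> V\<close>] by simp
  then have "(E ^^ (i + j)) x b" by (rule relpowp_trans[OF ij(2)])
  then have "dist E x b \<le> i + j" by (rule dist_le_relpowp)
  then show ?thesis using ij(1) by linarith
qed

lemma automorphism_image_other_half: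
  assumes aut: "automorphism V E \<alpha>" and V: "V = C1 \<union> C2" "C1 \<inter> C2 = {}"
    and bij: "bij_betw \<alpha> C1 C2"
  shows "\<alpha> ` C2 = C1"
proof -
  have "\<alpha> ` C2 = \<alpha> ` (V - C1)" using V by blast
  also have "\<dots> = \<alpha> ` V - \<alpha> ` C1"
    using aut V by (intro inj_on_image_set_diff) (auto simp: automorphism_def bij_betw_def)
  also have "\<dots> = C1"
    using aut bij V unfolding automorphism_def bij_betw_def by blast
  finally show ?thesis .
qed

lemma reflection_half_swap:
  assumes aut: "automorphism V E \<alpha>" and V: "V = C1 \<union> C2" "C1 \<inter> C2 = {}"
    and bij: "bij_betw \<alpha> C1 C2"
    and cross: "\<And>x y. E x y \<Longrightarrow> x \<in> C1 \<Longrightarrow> y \<notin> C1 \<Longrightarrow> \<alpha> x = y"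
  shows "reflection C1 (half_swap C1 \<alpha>)"
proof -
  let ?\<beta> = "half_swap C1 \<alpha>"
  note \<beta>C1 = half_swap_first_half[OF bij V(2)] and \<beta>C2 = half_swap_second_half[OF bij V(2)]
  have flip: "?\<beta> x = y" if "E x y" "x \<in> C1 \<longleftrightarrow> y \<notin> C1" for x y
  proof (cases "x \<in> C1")
    case True
    then show ?thesis using cross that \<beta>C1 by simp
  next
    case False
    then have "y \<in> C1" "\<alpha> y = x" using cross[of y x] sympD[OF symp_E] that by auto
    then show ?thesis using \<beta>C1 by metis
  qed
  have "E (?\<beta> x) (?\<beta> y)" if "E x y" for x y
  proof -
    have "x \<in> V" "y \<in> V" using edge_in_V that by auto
    then consider "x \<in> C1 \<longleftrightarrow> y \<notin> C1" | "x \<in> C1" "y \<in> C1" | "x \<in> C2" "y \<in> C2"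
      using V by blast
    then show ?thesis
    proof cases
      case 1
      then have "?\<beta> x = y" "?\<beta> y = x" using flip that sympD[OF symp_E] by blast+
      then show ?thesis using that sympD[OF symp_E] by simp
    next
      case 2
      then show ?thesis using aut that V \<beta>C1 unfolding automorphism_def by simp
    next
      case 3
      then have "E (?\<beta> x) (?\<beta> y) \<longleftrightarrow> E (\<alpha> (?\<beta> x)) (\<alpha> (?\<beta> y))"
        using aut V \<beta>C2 unfolding automorphism_def by blast
      then show ?thesis using that 3 \<beta>C2 by simp
    qed
  qed
  moreover have "?\<beta> x \<in> V \<and> ?\<beta> (?\<beta> x) = x \<and> (?\<beta> x \<in> C1 \<longleftrightarrow> x \<notin> C1)" if "x \<in> V" for x
    using that V \<beta>C1[of x] \<beta>C2[of x] by blast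
  ultimately show ?thesis unfolding reflection_def using flip by blast
qed

lemma mirror_graph_edge_reflection:
  assumes "mirror_graph V E" "E u v"
  obtains S \<beta> where "reflection S \<beta>" "\<beta> u = v"
proof -
  obtain P where P: "mirror_partition V E P" using assms(1) unfolding mirror_graph_def by blast
  have "{u, v} \<in> \<Union>P"
    using P assms(2) unfolding mirror_partition_def partition_of_def edges_def by blast
  then obtain F where "F \<in> P" "{u, v} \<in> F" by blast
  then obtain \<alpha> C1 C2 where aut: "automorphism V E \<alpha>"
    and swap: "\<And>x y. E x y \<Longrightarrow> {x, y} \<in> F \<Longrightarrow> \<alpha> x = y"
    and comp: "components V (del_edges E F) = {C1, C2}" "C1 \<noteq> C2"
    and bij: "bij_betw \<alpha> C1 C2"
    using mirror_partitionE[OF P] by metis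
  have "symp (del_edges E F)"
    using sympD[OF symp_E] unfolding del_edges_def by (auto intro: sympI simp: insert_commute)
  note V = components_eq_doubleton[OF this comp]
  have cut_in_F: "{x, y} \<in> F" if "E x y" "x \<in> C1" "y \<notin> C1" for x y
  proof (rule ccontr)
    assume "{x, y} \<notin> F"
    then have "del_edges E F x y" using that(1) unfolding del_edges_def by simp
    moreover have "\<And>x y. del_edges E F x y \<Longrightarrow> y \<in> V"
      using edge_in_V unfolding del_edges_def by blast
    moreover have "C1 \<in> components V (del_edges E F)" using comp(1) by simp
    ultimately have "y \<in> C1" using components_closed that(2) by metis
    then show False using that(3) by contradiction
  qed
  have \<beta>: "reflection C1 (half_swap C1 \<alpha>)"
    by (rule reflection_half_swap[OF aut V bij]) (use swap cut_in_F in blast)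
  have "\<alpha> u = v" using swap assms(2) \<open>{u, v} \<in> F\<close> by blast
  moreover have "\<alpha> ` C1 = C2" "\<alpha> ` C2 = C1"
    using bij automorphism_image_other_half[OF aut V bij] by (simp_all add: bij_betw_def)
  moreover have "u \<in> C1 \<or> u \<in> C2" using edge_in_V assms(2) V(1) by blast
  ultimately have "u \<in> C1 \<longleftrightarrow> v \<notin> C1" using V(2) by blast
  then show ?thesis using that \<beta> reflectionD(5)[OF \<beta> assms(2)] by blast
qed

lemma mirror_ex_dist_diam:
  assumes mirror: "mirror_graph V E" and "v \<in> V"
  shows "\<exists>w\<in>V. dist E v w = diam V E"
proof -
  obtain v0 w0 where v0: "v0 \<in> V" "w0 \<in> V" "dist E v0 w0 = diam V E"
    using diam_attained by blast
  have "E\<^sup>*\<^sup>* v0 v" using connected v0(1) \<open>v \<in> V\<close> unfolding connected_graph_def by blast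
  then show ?thesis
  proof (induction rule: rtranclp_induct)
    case base
    then show ?case using v0 by blast
  next
    case (step y z)
    then obtain w where w: "w \<in> V" "dist E y w = diam V E" by blast
    obtain S \<beta> where \<beta>: "reflection S \<beta>" "\<beta> y = z"
      using mirror_graph_edge_reflection[OF mirror step(2)] by blast
    have "dist E z (\<beta> w) = diam V E"
      using reflection_dist[OF \<beta>(1) _ w(1)] edge_in_V[OF step(2)] \<beta>(2) w(2) by metis
    then show ?case using reflectionD(1)[OF \<beta>(1) w(1)] by blast
  qed
qed

lemma dist_diam_opposite_sides:
  assumes r: "reflection S \<beta>" and "x \<in> V" "z \<in> V" and "dist E x z = diam V E"
  shows "x \<in> S \<longleftrightarrow> z \<notin> S"
proof (rule ccontr)
  assume "\<not> (x \<in> S \<longleftrightarrow> z \<notin> S)"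
  then have "diam V E < dist E x (\<beta> z)"
    using dist_less_reflection_same_side[OF r assms(2,3)] assms(4) by auto
  then show False using dist_le_diam[OF \<open>x \<in> V\<close> reflectionD(1)[OF r \<open>z \<in> V\<close>]] by simp
qed

lemma mirror_dist_add_diametral:
  assumes mirror: "mirror_graph V E" and x: "x \<in> V" "x' \<in> V" "dist E x x' = diam V E"
  shows "y \<in> V \<Longrightarrow> dist E x y + dist E y x' = diam V E"
proof (induction "dist E x y" arbitrary: y)
  case 0
  then have "y = x" using dist_eq_0_iff[OF x(1)] by simp
  then show ?case using x(3) by simp
next
  case (Suc n)
  obtain y' where y': "E y' y" "dist E x y' = n"
    using dist_SucE[OF x(1) Suc.prems Suc.hyps(2)[symmetric]] .
  have "y' \<in> V" using edge_in_V y'(1) by blast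
  then have IH: "n + dist E y' x' = diam V E" using Suc.hyps(1)[OF y'(2)[symmetric]] y'(2) by simp
  obtain S \<beta> where \<beta>: "reflection S \<beta>" "\<beta> y' = y"
    using mirror_graph_edge_reflection[OF mirror y'(1)] .
  have \<beta>y: "\<beta> y = y'" using \<beta> reflectionD(2)[OF \<beta>(1) \<open>y' \<in> V\<close>] by simp
  text \<open>\<open>y\<close> is farther from \<open>x\<close> than its mirror image \<open>y'\<close>, so it lies on the side of \<open>x'\<close>.\<close>
  have "x \<in> S \<longleftrightarrow> y \<notin> S"
    using dist_less_reflection_same_side[OF \<beta>(1) x(1) Suc.prems] \<beta>y y'(2) Suc.hyps(2) by auto
  then have "x' \<in> S \<longleftrightarrow> y \<in> S" using dist_diam_opposite_sides[OF \<beta>(1) x] by blast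
  then have "dist E x' y < dist E x' y'"
    using dist_less_reflection_same_side[OF \<beta>(1) x(2) Suc.prems] \<beta>y by simp
  moreover have "diam V E \<le> dist E x y + dist E y x'"
    using dist_triangle[OF x(1) Suc.prems x(2)] x(3) by simp
  ultimately show ?case
    using IH Suc.hyps(2) dist_commute[OF x(2)] Suc.prems \<open>y' \<in> V\<close> by fastforce
qed

lemma mirror_diametral_unique:
  assumes "mirror_graph V E" "v \<in> V" "w \<in> V" "w' \<in> V"
    and "dist E v w = diam V E" "dist E v w' = diam V E"
  shows "w = w'"
proof -
  have "dist E v w + dist E w w' = diam V E" using mirror_dist_add_diametral assms by blast
  then show ?thesis using assms(3-5) dist_eq_0_iff by simp
qed

lemma mirror_even_graph: "mirror_graph V E \<Longrightarrow> even_graph V E"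
  unfolding even_graph_def using mirror_ex_dist_diam mirror_diametral_unique by blast

lemma mirror_antipode:
  assumes "mirror_graph V E" "v \<in> V"
  shows "antipode V E v \<in> V" "dist E v (antipode V E v) = diam V E"
  using theI'[of "\<lambda>w. w \<in> V \<and> dist E v w = diam V E"] mirror_even_graph assms
  unfolding antipode_def even_graph_def by blast+

lemma mirror_antipode_adjacent:
  assumes mirror: "mirror_graph V E" and "E u v"
  shows "E (antipode V E u) (antipode V E v)"
proof -
  have V: "u \<in> V" "v \<in> V" using edge_in_V assms(2) by auto
  note u' = mirror_antipode[OF mirror V(1)] and v' = mirror_antipode[OF mirror V(2)]
  have "dist E u v + dist E v (antipode V E u) = diam V E"
    using mirror_dist_add_diametral[OF mirror V(1) u' V(2)] .
  moreover have "dist E v (antipode V E u) + dist E (antipode V E u) (antipode V E v) = diam V E"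
    using mirror_dist_add_diametral[OF mirror V(2) v' u'(1)] .
  moreover have "dist E u v = 1" using dist_eq_1_iff V assms(2) by blast
  ultimately have "dist E (antipode V E u) (antipode V E v) = 1" by linarith
  then show ?thesis using dist_eq_1_iff u'(1) v'(1) by blast
qed

end

theorem lemma1:
  fixes V :: "'a set" and E :: "'a \<Rightarrow> 'a \<Rightarrow> bool"
  assumes "connected_graph V E"
    and "mirror_graph V E"
  shows "harmonic_even V E"
proof -
  interpret finite_connected_graph V E using assms(1) by unfold_locales
  show ?thesis
    unfolding harmonic_even_def using mirror_even_graph mirror_antipode_adjacent assms(2) by blast
qed

end
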